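(* Let $M$ be a timelike surface in $\mathbb{R}^{n,1}$ with a canonical null direction with respect to a constant unit spacelike vector $Z$. Then $\langle II(Z^\top,X),Z^\perp\rangle=0$ for every tangent $X$; equivalently $A_{Z^{\perp}}(Z^{\top})=0$. Moreover $\nabla_{Z^{\top}}Z^{\top}=0$.
   Context: $\mathbb{R}^{n,1}$ is $\mathbb{R}^{n+1}$ with the metric $-dx_1^2+dx_2^2+\dots+dx_{n+1}^2$. A surface is timelike if the induced metric has signature $(1,1)$; a vector $v$ is lightlike if $v\ne0$ and $\langle v,v\rangle=0$. For a constant vector $Z$, $Z=Z^\top+Z^\perp$ along $M$ (tangent and normal parts); $M$ has a canonical null direction with respect to $Z$ if $Z^\top$ is lightlike everywhere on $M$. $\nabla$ is the Levi-Civita connection of $M$, $II$ the second fundamental form, $A_\nu$ the shape operator ($\langle A_\nu X,Y\rangle=\langle II(X,Y),\nu\rangle$). *)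

theory Defs
  imports "HOL-Analysis.Analysis"
begin

text \<open>Minkowski space R^{n,1} is modelled as real \<times> real^'n : the first
  component is the time coordinate x_1, the second the space coordinates
  x_2,...,x_{n+1}.\<close>

type_synonym 'n mink = "real \<times> (real ^ 'n)"

definition lor :: "'n::finite mink \<Rightarrow> 'n mink \<Rightarrow> real" where
  "lor v w = - (fst v * fst w) + (snd v \<bullet> snd w)"

definition lightlike :: "'n::finite mink \<Rightarrow> bool" where
  "lightlike v \<longleftrightarrow> v \<noteq> 0 \<and> lor v v = 0"

definition dir :: "nat \<Rightarrow> real \<times> real" where
  "dir i = (if i = 0 then (1, 0) else (0, 1))"

definition pd :: "(real \<times> real \<Rightarrow> 'b::real_normed_vector) \<Rightarrow> nat \<Rightarrow> real \<times> real \<Rightarrow> 'b" where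
  "pd h i u = frechet_derivative h (at u) (dir i)"

fun iterpd :: "(real \<times> real \<Rightarrow> 'b::real_normed_vector) \<Rightarrow> nat list \<Rightarrow> real \<times> real \<Rightarrow> 'b" where
  "iterpd h [] = h"
| "iterpd h (i # is) = pd (iterpd h is) i"

definition smooth_chart :: "(real \<times> real) set \<Rightarrow> (real \<times> real \<Rightarrow> 'b::real_normed_vector) \<Rightarrow> bool" where
  "smooth_chart U h \<longleftrightarrow> (\<forall>is. \<forall>u\<in>U. iterpd h is differentiable (at u))"

definition gm :: "(real \<times> real \<Rightarrow> 'n::finite mink) \<Rightarrow> real \<times> real \<Rightarrow> nat \<Rightarrow> nat \<Rightarrow> real" where
  "gm f u i j = lor (pd f i u) (pd f j u)"

definition detg :: "(real \<times> real \<Rightarrow> 'n::finite mink) \<Rightarrow> real \<times> real \<Rightarrow> real" where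
  "detg f u = gm f u 0 0 * gm f u 1 1 - gm f u 0 1 * gm f u 1 0"

definition ginv :: "(real \<times> real \<Rightarrow> 'n::finite mink) \<Rightarrow> real \<times> real \<Rightarrow> nat \<Rightarrow> nat \<Rightarrow> real" where
  "ginv f u i j =
     (if i = 0 \<and> j = 0 then gm f u 1 1 / detg f u
      else if i = 1 \<and> j = 1 then gm f u 0 0 / detg f u
      else if i = 0 \<and> j = 1 then - gm f u 0 1 / detg f u
      else - gm f u 1 0 / detg f u)"

text \<open>Timelike surface chart: C^\<infinity> parametrization on an open set whose
  induced metric has signature (1,1) (for a symmetric 2x2 matrix: det < 0)
  at every point.\<close>

definition timelike_surface_chart :: "(real \<times> real) set \<Rightarrow> (real \<times> real \<Rightarrow> 'n::finite mink) \<Rightarrow> bool" where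
  "timelike_surface_chart U f \<longleftrightarrow> open U \<and> smooth_chart U f \<and> (\<forall>u\<in>U. detg f u < 0)"

definition tspace :: "(real \<times> real \<Rightarrow> 'n::finite mink) \<Rightarrow> real \<times> real \<Rightarrow> 'n mink set" where
  "tspace f u = span {pd f 0 u, pd f 1 u}"

definition tcoef :: "(real \<times> real \<Rightarrow> 'n::finite mink) \<Rightarrow> real \<times> real \<Rightarrow> 'n mink \<Rightarrow> nat \<Rightarrow> real" where
  "tcoef f u v k = (\<Sum>l<2. ginv f u k l * lor v (pd f l u))"

definition tan_part :: "(real \<times> real \<Rightarrow> 'n::finite mink) \<Rightarrow> real \<times> real \<Rightarrow> 'n mink \<Rightarrow> 'n mink" where
  "tan_part f u v = (\<Sum>k<2. tcoef f u v k *\<^sub>R pd f k u)"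

definition nor_part :: "(real \<times> real \<Rightarrow> 'n::finite mink) \<Rightarrow> real \<times> real \<Rightarrow> 'n mink \<Rightarrow> 'n mink" where
  "nor_part f u v = v - tan_part f u v"

text \<open>Second fundamental form: II(d_i f, d_j f) = (d_i d_j f)^perp, extended bilinearly.\<close>

definition sff :: "(real \<times> real \<Rightarrow> 'n::finite mink) \<Rightarrow> real \<times> real \<Rightarrow> 'n mink \<Rightarrow> 'n mink \<Rightarrow> 'n mink" where
  "sff f u X Y = (\<Sum>i<2. \<Sum>j<2. (tcoef f u X i * tcoef f u Y j) *\<^sub>R nor_part f u (pd (pd f j) i u))"

text \<open>Shape operator: the tangent vector A_nu X with <A_nu X, Y> = <II(X,Y), nu> for all tangent Y.\<close>

definition shape :: "(real \<times> real \<Rightarrow> 'n::finite mink) \<Rightarrow> real \<times> real \<Rightarrow> 'n mink \<Rightarrow> 'n mink \<Rightarrow> 'n mink" where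
  "shape f u \<nu> X = (\<Sum>i<2. \<Sum>j<2. (ginv f u i j * lor (sff f u X (pd f j u)) \<nu>) *\<^sub>R pd f i u)"

definition christoffel :: "(real \<times> real \<Rightarrow> 'n::finite mink) \<Rightarrow> real \<times> real \<Rightarrow> nat \<Rightarrow> nat \<Rightarrow> nat \<Rightarrow> real" where
  "christoffel f u k i j = (1/2) * (\<Sum>l<2. ginv f u k l *
      (pd (\<lambda>w. gm f w j l) i u + pd (\<lambda>w. gm f w i l) j u - pd (\<lambda>w. gm f w i j) l u))"

definition levi_civita :: "(real \<times> real \<Rightarrow> 'n::finite mink) \<Rightarrow> real \<times> real \<Rightarrow> 'n mink
     \<Rightarrow> (real \<times> real \<Rightarrow> 'n mink) \<Rightarrow> 'n mink" where
  "levi_civita f u X V = (\<Sum>k<2.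
      ((\<Sum>i<2. tcoef f u X i * pd (\<lambda>w. tcoef f w (V w) k) i u)
       + (\<Sum>i<2. \<Sum>j<2. christoffel f u k i j * tcoef f u X i * tcoef f u (V u) j)) *\<^sub>R pd f k u)"

end

theory Submission
  imports Defs
begin

text \<open>Write \<open>T = Z\<^sup>\<top> = \<Sum> c\<^sup>k \<partial>\<^sub>k f\<close> and \<open>N = Z\<^sup>\<bottom> = Z - T\<close>. Differentiating \<open>\<langle>T,T\<rangle> = 0\<close>
  and \<open>\<langle>T,Z\<rangle> = \<langle>T,T\<rangle> + \<langle>T,N\<rangle> = 0\<close> shows that every partial derivative \<open>\<partial>\<^sub>j T\<close> is
  orthogonal to \<open>N\<close>. As \<open>\<partial>\<^sub>j T = \<Sum> (\<partial>\<^sub>j c\<^sup>k) \<partial>\<^sub>k f + \<Sum> c\<^sup>k \<partial>\<^sub>j \<partial>\<^sub>k f\<close> and \<open>N\<close> is normal, this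
  says \<open>\<langle>II(T, \<partial>\<^sub>j f), N\<rangle> = 0\<close>, which gives the claims on \<open>II\<close> and \<open>A\<^sub>N\<close>. Differentiating
  \<open>\<langle>T, \<partial>\<^sub>l f\<rangle> = \<langle>Z, \<partial>\<^sub>l f\<rangle>\<close> along \<open>T\<close> gives \<open>\<langle>D\<^sub>T T, \<partial>\<^sub>l f\<rangle> = \<langle>N, II(T, \<partial>\<^sub>l f)\<rangle> = 0\<close>, so the
  ambient derivative \<open>D\<^sub>T T\<close> is normal and its tangential part \<open>\<nabla>\<^sub>T T\<close> (Gauss formula)
  vanishes.\<close>

section \<open>Symmetry of second derivatives\<close>

lemma has_vector_derivative_along_line:
  fixes F :: "'a::real_normed_vector \<Rightarrow> 'b::real_normed_vector"
  assumes "F differentiable (at (a + t *\<^sub>R p))"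
  shows "((\<lambda>s. F (a + s *\<^sub>R p)) has_vector_derivative frechet_derivative F (at (a + t *\<^sub>R p)) p) (at t)"
proof -
  let ?D = "frechet_derivative F (at (a + t *\<^sub>R p))"
  have "((\<lambda>s. a + s *\<^sub>R p) has_derivative (\<lambda>s. s *\<^sub>R p)) (at t)"
    by (auto intro!: derivative_eq_intros)
  from diff_chain_at[OF this frechet_derivative_works[THEN iffD1, OF assms]]
  have "((\<lambda>s. F (a + s *\<^sub>R p)) has_derivative (\<lambda>s. ?D (s *\<^sub>R p))) (at t)"
    by (simp add: o_def)
  moreover have "linear ?D"
    using assms frechet_derivative_works has_derivative_linear by blast
  ultimately show ?thesis
    by (simp add: has_vector_derivative_def linear_scale)
qed

lemma second_difference_bound:
  fixes F :: "'a::real_normed_vector \<Rightarrow> 'b::real_normed_vector"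
  assumes h: "0 < h"
    and diff: "\<And>t. t \<in> {0..h} \<Longrightarrow>
      F differentiable (at (u + t *\<^sub>R p)) \<and> F differentiable (at (u + h *\<^sub>R q + t *\<^sub>R p))"
    and bound: "\<And>t. t \<in> {0..h} \<Longrightarrow>
      norm (frechet_derivative F (at (u + h *\<^sub>R q + t *\<^sub>R p)) p
            - frechet_derivative F (at (u + t *\<^sub>R p)) p - h *\<^sub>R A) \<le> B"
  shows "norm (F (u + h *\<^sub>R p + h *\<^sub>R q) - F (u + h *\<^sub>R q) - F (u + h *\<^sub>R p) + F u - h\<^sup>2 *\<^sub>R A)
    \<le> B * h"
proof -
  let ?K = "\<lambda>x. frechet_derivative F (at x) p"
  define \<phi> where "\<phi> t = F (u + h *\<^sub>R q + t *\<^sub>R p) - F (u + t *\<^sub>R p) - t *\<^sub>R (h *\<^sub>R A)" for t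
  have der: "(\<phi> has_vector_derivative (?K (u + h *\<^sub>R q + t *\<^sub>R p) - ?K (u + t *\<^sub>R p) - h *\<^sub>R A)) (at t)"
    if "t \<in> {0..h}" for t
    unfolding \<phi>_def using diff[OF that]
    by (intro has_vector_derivative_diff has_vector_derivative_along_line)
      (auto intro!: derivative_eq_intros)
  have "continuous_on {0..h} \<phi>"
    using der by (meson continuous_at_imp_continuous_on has_vector_derivative_continuous)
  then have "norm (\<phi> h - \<phi> 0) \<le> B * h - B * 0"
    using h der bound
    by (intro differentiable_bound_general[where \<phi>'="\<lambda>_. B"
          and f'="\<lambda>t. ?K (u + h *\<^sub>R q + t *\<^sub>R p) - ?K (u + t *\<^sub>R p) - h *\<^sub>R A"])
      (auto intro!: derivative_eq_intros continuous_intros)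
  moreover have "\<phi> h - \<phi> 0 = F (u + h *\<^sub>R p + h *\<^sub>R q) - F (u + h *\<^sub>R q) - F (u + h *\<^sub>R p) + F u - h\<^sup>2 *\<^sub>R A"
    by (simp add: \<phi>_def power2_eq_square algebra_simps)
  ultimately show ?thesis by simp
qed

lemma norm_scaleR_add_scaleR_le:
  assumes "0 \<le> t" "t \<le> h" "0 \<le> s" "s \<le> h"
  shows "norm (t *\<^sub>R p + s *\<^sub>R q) \<le> h * (norm p + norm q)"
proof -
  have "norm (t *\<^sub>R p + s *\<^sub>R q) \<le> t * norm p + s * norm q"
    using norm_triangle_ineq[of "t *\<^sub>R p" "s *\<^sub>R q"] assms by simp
  also have "\<dots> \<le> h * (norm p + norm q)"
    using assms by (simp add: distrib_left add_mono mult_right_mono)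
  finally show ?thesis .
qed

lemma linearization_increment_bound:
  fixes K :: "'a::real_normed_vector \<Rightarrow> 'b::real_normed_vector"
  assumes "linear D" "0 \<le> e"
    and approx: "\<And>v. norm v < d \<Longrightarrow> norm (K (u + v) - K u - D v) \<le> e * norm v"
    and t: "0 \<le> t" "t \<le> h" and small: "h * (norm p + norm q) < d"
  shows "norm (K (u + h *\<^sub>R q + t *\<^sub>R p) - K (u + t *\<^sub>R p) - h *\<^sub>R D q) \<le> 2 * e * (h * (norm p + norm q))"
proof -
  have err: "norm (K (u + (t *\<^sub>R p + s *\<^sub>R q)) - K u - D (t *\<^sub>R p + s *\<^sub>R q)) \<le> e * (h * (norm p + norm q))"
    if "0 \<le> s" "s \<le> h" for s
  proof -
    have "norm (t *\<^sub>R p + s *\<^sub>R q) \<le> h * (norm p + norm q)"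
      using norm_scaleR_add_scaleR_le t that .
    moreover have "norm (K (u + (t *\<^sub>R p + s *\<^sub>R q)) - K u - D (t *\<^sub>R p + s *\<^sub>R q)) \<le> e * norm (t *\<^sub>R p + s *\<^sub>R q)"
      using approx calculation small by simp
    ultimately show ?thesis using \<open>0 \<le> e\<close> by (meson mult_left_mono order_trans)
  qed
  have "K (u + h *\<^sub>R q + t *\<^sub>R p) - K (u + t *\<^sub>R p) - h *\<^sub>R D q
      = (K (u + (t *\<^sub>R p + h *\<^sub>R q)) - K u - D (t *\<^sub>R p + h *\<^sub>R q))
        - (K (u + (t *\<^sub>R p + 0 *\<^sub>R q)) - K u - D (t *\<^sub>R p + 0 *\<^sub>R q))"
    by (simp add: linear_add[OF \<open>linear D\<close>] linear_scale[OF \<open>linear D\<close>] algebra_simps)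
  moreover have "norm (x - y) \<le> 2 * c" if "norm x \<le> c" "norm y \<le> c" for x y :: 'b and c
    using norm_triangle_ineq4[of x y] that by linarith
  ultimately show ?thesis
    using err[of h] err[of 0] t by (simp only: mult.assoc)
qed

text \<open>Peano's form of Schwarz's theorem: differentiability of the single directional
  derivative \<open>F\<^sub>p\<close> at \<open>u\<close> already makes the second difference quotient converge to
  \<open>D(F\<^sub>p)(u) q\<close>. As that quotient is symmetric in \<open>p\<close> and \<open>q\<close>, the mixed derivatives agree.\<close>

lemma second_difference_tendsto:
  fixes F :: "'a::real_normed_vector \<Rightarrow> 'b::real_normed_vector"
  assumes "open U" "u \<in> U" and diff: "\<And>x. x \<in> U \<Longrightarrow> F differentiable (at x)"
    and K: "((\<lambda>x. frechet_derivative F (at x) p) has_derivative D) (at u)"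
  shows "((\<lambda>h. (F (u + h *\<^sub>R p + h *\<^sub>R q) - F (u + h *\<^sub>R q) - F (u + h *\<^sub>R p) + F u) /\<^sub>R h\<^sup>2)
          \<longlongrightarrow> D q) (at_right 0)"
proof (rule tendstoI)
  fix e :: real assume "e > 0"
  let ?K = "\<lambda>x. frechet_derivative F (at x) p"
  let ?\<Delta> = "\<lambda>h. F (u + h *\<^sub>R p + h *\<^sub>R q) - F (u + h *\<^sub>R q) - F (u + h *\<^sub>R p) + F u"
  define C where "C = norm p + norm q"
  define e' where "e' = e / (2 * C + 1)"
  have pos: "2 * C + 1 > 0" by (simp add: C_def add_nonneg_pos)
  then have "e' > 0" using \<open>e > 0\<close> by (simp add: e'_def)
  have "2 * e' * C = e * (2 * C) / (2 * C + 1)" by (simp add: e'_def)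
  also have "\<dots> < e" using pos \<open>e > 0\<close> by (simp add: divide_less_eq)
  finally have "2 * e' * C < e" .
  obtain r where "r > 0" "ball u r \<subseteq> U"
    using assms(1,2) open_contains_ball by blast
  obtain d where "d > 0" and d: "\<And>v. norm v < d \<Longrightarrow> norm (?K (u + v) - ?K u - D v) \<le> e' * norm v"
    using K \<open>e' > 0\<close> unfolding has_derivative_at_alt by (metis add_diff_cancel_left')
  have "linear D" using K has_derivative_linear by blast
  have close: "dist (?\<Delta> h /\<^sub>R h\<^sup>2) (D q) < e" if "0 < h" "h * C < min r d" for h
  proof -
    have in_U: "u + (t *\<^sub>R p + s *\<^sub>R q) \<in> U" if "t \<in> {0..h}" "s \<in> {0..h}" for t s
    proof -
      have "norm (t *\<^sub>R p + s *\<^sub>R q) \<le> h * C"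
        using norm_scaleR_add_scaleR_le that unfolding C_def by auto
      then show ?thesis
        using \<open>h * C < min r d\<close> \<open>ball u r \<subseteq> U\<close>
        by (auto simp: dist_norm norm_minus_commute add.commute)
    qed
    have "norm (?\<Delta> h - h\<^sup>2 *\<^sub>R D q) \<le> (2 * e' * (h * C)) * h"
    proof (rule second_difference_bound[OF \<open>0 < h\<close>])
      fix t assume "t \<in> {0..h}"
      then show "F differentiable (at (u + t *\<^sub>R p)) \<and> F differentiable (at (u + h *\<^sub>R q + t *\<^sub>R p))"
        using diff in_U[of t 0] in_U[of t h] \<open>0 < h\<close> by (simp add: add.commute add.left_commute)
      show "norm (?K (u + h *\<^sub>R q + t *\<^sub>R p) - ?K (u + t *\<^sub>R p) - h *\<^sub>R D q) \<le> 2 * e' * (h * C)"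
        using \<open>t \<in> {0..h}\<close> \<open>h * C < min r d\<close> \<open>e' > 0\<close> unfolding C_def
        by (intro linearization_increment_bound[OF \<open>linear D\<close> _ d]) auto
    qed
    then have "norm (?\<Delta> h - h\<^sup>2 *\<^sub>R D q) / h\<^sup>2 \<le> 2 * e' * C"
      using \<open>0 < h\<close> by (simp add: divide_le_eq power2_eq_square mult_ac)
    moreover have "?\<Delta> h /\<^sub>R h\<^sup>2 - D q = (?\<Delta> h - h\<^sup>2 *\<^sub>R D q) /\<^sub>R h\<^sup>2"
      using \<open>0 < h\<close> by (simp add: scaleR_diff_right)
    ultimately show ?thesis
      using \<open>2 * e' * C < e\<close> by (simp add: dist_norm divide_inverse_commute)
  qed
  have "((\<lambda>h. h * C) \<longlongrightarrow> 0) (at_right 0)"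
    by (intro tendsto_mult_left_zero tendsto_ident_at)
  then have "\<forall>\<^sub>F h in at_right 0. h * C < min r d"
    using \<open>r > 0\<close> \<open>d > 0\<close> by (intro order_tendstoD(2)) auto
  with eventually_at_right_less[of 0]
  show "\<forall>\<^sub>F h in at_right 0. dist (?\<Delta> h /\<^sub>R h\<^sup>2) (D q) < e"
    by eventually_elim (rule close)
qed

lemma frechet_derivative_directional_commute:
  fixes F :: "'a::real_normed_vector \<Rightarrow> 'b::real_normed_vector"
  assumes "open U" "u \<in> U" "\<And>x. x \<in> U \<Longrightarrow> F differentiable (at x)"
    and "(\<lambda>x. frechet_derivative F (at x) p) differentiable (at u)"
    and "(\<lambda>x. frechet_derivative F (at x) q) differentiable (at u)"
  shows "frechet_derivative (\<lambda>x. frechet_derivative F (at x) p) (at u) q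
       = frechet_derivative (\<lambda>x. frechet_derivative F (at x) q) (at u) p"
proof -
  let ?\<Delta> = "\<lambda>h. (F (u + h *\<^sub>R p + h *\<^sub>R q) - F (u + h *\<^sub>R q) - F (u + h *\<^sub>R p) + F u) /\<^sub>R h\<^sup>2"
  have "(?\<Delta> \<longlongrightarrow> frechet_derivative (\<lambda>x. frechet_derivative F (at x) p) (at u) q) (at_right 0)"
    using assms by (intro second_difference_tendsto) (auto simp: frechet_derivative_works)
  moreover have "(?\<Delta> \<longlongrightarrow> frechet_derivative (\<lambda>x. frechet_derivative F (at x) q) (at u) p) (at_right 0)"
  proof -
    have "?\<Delta> = (\<lambda>h. (F (u + h *\<^sub>R q + h *\<^sub>R p) - F (u + h *\<^sub>R p) - F (u + h *\<^sub>R q) + F u) /\<^sub>R h\<^sup>2)"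
      by (simp add: algebra_simps)
    then show ?thesis
      using assms by (simp only:) (intro second_difference_tendsto, auto simp: frechet_derivative_works)
  qed
  ultimately show ?thesis by (rule tendsto_unique[OF trivial_limit_at_right_real])
qed

lemma lor_commute: "lor v w = lor w v"
  by (simp add: lor_def inner_commute mult.commute)

lemma lor_add_left: "lor (x + y) z = lor x z + lor y z"
  by (simp add: lor_def inner_add_left algebra_simps)

lemma lor_add_right: "lor z (x + y) = lor z x + lor z y"
  by (simp add: lor_def inner_add_right algebra_simps)

lemma lor_diff_left: "lor (x - y) z = lor x z - lor y z"
  by (simp add: lor_def inner_diff_left algebra_simps)

lemma lor_diff_right: "lor z (x - y) = lor z x - lor z y"
  by (simp add: lor_def inner_diff_right algebra_simps)

lemma lor_scaleR_left: "lor (a *\<^sub>R x) z = a * lor x z"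
  by (simp add: lor_def algebra_simps)

lemma lor_scaleR_right: "lor z (a *\<^sub>R x) = a * lor z x"
  by (simp add: lor_def algebra_simps)

lemma lor_zero_left [simp]: "lor 0 z = 0"
  by (simp add: lor_def)

lemma lor_zero_right [simp]: "lor z 0 = 0"
  by (simp add: lor_def)

lemmas lor_simps = lor_add_left lor_add_right lor_diff_left lor_diff_right
  lor_scaleR_left lor_scaleR_right

lemma sum_lessThan_2: "(\<Sum>k<2. g k) = g 0 + g (1::nat)"
  by (simp add: numeral_2_eq_2)

lemma has_derivative_lor:
  assumes "(g has_derivative G) (at u)" "(h has_derivative H) (at u)"
  shows "((\<lambda>w. lor (g w) (h w)) has_derivative (\<lambda>v. lor (G v) (h u) + lor (g u) (H v))) (at u)"
  unfolding lor_def
  by (rule derivative_eq_intros has_derivative_fst has_derivative_snd assms | simp)+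
    (auto simp: algebra_simps)

lemma differentiable_lor:
  "g differentiable (at u) \<Longrightarrow> h differentiable (at u) \<Longrightarrow> (\<lambda>w. lor (g w) (h w)) differentiable (at u)"
  unfolding differentiable_def using has_derivative_lor by blast

lemma pd_eq_has_derivative: "(h has_derivative D) (at u) \<Longrightarrow> pd h i u = D (dir i)"
  unfolding pd_def using frechet_derivative_at by metis

lemma pd_lor:
  assumes "g differentiable (at u)" "h differentiable (at u)"
  shows "pd (\<lambda>w. lor (g w) (h w)) i u = lor (pd g i u) (h u) + lor (g u) (pd h i u)"
  using pd_eq_has_derivative[OF has_derivative_lor[OF assms[unfolded frechet_derivative_works]]]
  by (simp add: pd_def)

lemma pd_const: "pd (\<lambda>w. c) i u = 0"
  using pd_eq_has_derivative[OF has_derivative_const[of c "at u"], of i] by simp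

lemma pd_cong:
  assumes "open V" "u \<in> V" "\<And>w. w \<in> V \<Longrightarrow> g w = h w"
  shows "pd g i u = pd h i u"
proof -
  have "(g has_derivative D) (at u) \<longleftrightarrow> (h has_derivative D) (at u)" for D
    using has_derivative_transform_within_open[OF _ assms(1,2)] assms(3) by metis
  then show ?thesis by (simp add: pd_def frechet_derivative_def)
qed

lemma pd_frame_combination:
  fixes c :: "nat \<Rightarrow> real \<times> real \<Rightarrow> real" and e :: "nat \<Rightarrow> real \<times> real \<Rightarrow> 'b::real_normed_vector"
  assumes "\<And>k. c k differentiable (at u)" "\<And>k. e k differentiable (at u)"
  shows "pd (\<lambda>w. \<Sum>k<2. c k w *\<^sub>R e k w) i u
       = (\<Sum>k<2. pd (c k) i u *\<^sub>R e k u + c k u *\<^sub>R pd (e k) i u)"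
proof -
  have "((\<lambda>w. \<Sum>k<2. c k w *\<^sub>R e k w) has_derivative
      (\<lambda>v. \<Sum>k<2. frechet_derivative (c k) (at u) v *\<^sub>R e k u + c k u *\<^sub>R frechet_derivative (e k) (at u) v)) (at u)"
    using assms by (auto intro!: derivative_eq_intros simp: frechet_derivative_works add.commute)
  from pd_eq_has_derivative[OF this] show ?thesis by (simp add: pd_def)
qed

lemma smooth_chart_differentiable:
  assumes "smooth_chart U f" "w \<in> U"
  shows "f differentiable (at w)" "pd f k differentiable (at w)"
  using assms iterpd.simps unfolding smooth_chart_def by metis+

lemma smooth_chart_pd_pd_commute:
  assumes "smooth_chart U f" "open U" "u \<in> U"
  shows "pd (pd f i) j u = pd (pd f j) i u"
  using frechet_derivative_directional_commute[OF assms(2,3), of f "dir i" "dir j"]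
    smooth_chart_differentiable[OF assms(1)] assms(3)
  by (simp add: pd_def[abs_def])

lemma gm_commute: "gm f w i j = gm f w j i"
  by (simp add: gm_def lor_commute)

lemma ginv_commute:
  assumes "k < 2" "l < 2"
  shows "ginv f w k l = ginv f w l k"
  using assms by (auto simp: ginv_def gm_commute[of f w "Suc 0" 0] less_2_cases_iff)

lemma ginv_gm:
  assumes "detg f w \<noteq> 0" "k < 2" "m < 2"
  shows "(\<Sum>l<2. ginv f w k l * gm f w m l) = (if k = m then 1 else 0)"
proof -
  have d: "gm f w 0 0 * gm f w 1 1 - gm f w 0 1 * gm f w 0 1 \<noteq> 0"
    using assms(1) by (simp add: detg_def gm_commute[of f w "Suc 0" 0])
  have "\<And>a b c :: real. a * c - b * b \<noteq> 0 \<Longrightarrow>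
      c / (a * c - b * b) * a + - b / (a * c - b * b) * b = 1 \<and>
      c / (a * c - b * b) * b + - b / (a * c - b * b) * c = 0 \<and>
      - b / (a * c - b * b) * a + a / (a * c - b * b) * b = 0 \<and>
      - b / (a * c - b * b) * b + a / (a * c - b * b) * c = 1"
    by (simp add: divide_simps)
  with d assms(2,3) show ?thesis
    by (auto simp: sum_lessThan_2 ginv_def detg_def gm_commute[of f w "Suc 0" 0] less_2_cases_iff)
qed

lemma linear_tcoef: "linear (\<lambda>v. tcoef f w v k)"
  by (rule linearI) (simp_all add: tcoef_def lor_simps sum.distrib sum_distrib_left algebra_simps)

lemma tcoef_add: "tcoef f w (v + v') k = tcoef f w v k + tcoef f w v' k"
  by (rule linear_add[OF linear_tcoef])

lemma tcoef_scaleR: "tcoef f w (a *\<^sub>R v) k = a * tcoef f w v k"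
  using linear_scale[OF linear_tcoef] by simp

lemma tcoef_sum: "tcoef f w (\<Sum>m\<in>M. g m) k = (\<Sum>m\<in>M. tcoef f w (g m) k)"
  using linear_sum[OF linear_tcoef] by (simp add: o_def)

lemma ginv_eq_0: "detg f w = 0 \<Longrightarrow> ginv f w k l = 0"
  by (simp add: ginv_def)

lemma tcoef_frame_combination:
  assumes "detg f w \<noteq> 0" "k < 2"
  shows "tcoef f w (\<Sum>m<2. a m *\<^sub>R pd f m w) k = a k"
proof -
  have "tcoef f w (\<Sum>m<2. a m *\<^sub>R pd f m w) k = (\<Sum>m<2. a m * (\<Sum>l<2. ginv f w k l * gm f w m l))"
    unfolding tcoef_sum tcoef_scaleR by (simp add: tcoef_def gm_def sum_distrib_left mult_ac)
  also have "\<dots> = a k"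
    using ginv_gm[OF assms] assms(2) by (auto simp: sum_lessThan_2 less_2_cases_iff)
  finally show ?thesis .
qed

lemma tcoef_frame:
  assumes "detg f w \<noteq> 0" "k < 2" "m < 2"
  shows "tcoef f w (pd f m w) k = (if k = m then 1 else 0)"
  using tcoef_frame_combination[OF assms(1,2), of "\<lambda>l. if l = m then 1 else 0"] assms(3)
  by (auto simp: sum_lessThan_2 less_2_cases_iff)

lemma tcoef_tan_part:
  assumes "k < 2"
  shows "tcoef f w (tan_part f w v) k = tcoef f w v k"
proof (cases "detg f w = 0")
  case True
  then show ?thesis by (simp add: tcoef_def ginv_eq_0)
next
  case False
  then show ?thesis unfolding tan_part_def by (rule tcoef_frame_combination[OF _ assms])
qed

lemma tan_part_idem: "tan_part f w (tan_part f w v) = tan_part f w v"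
  unfolding tan_part_def[of f w "tan_part f w v"]
  by (simp add: sum_lessThan_2 tcoef_tan_part) (simp add: tan_part_def sum_lessThan_2)

lemma lor_nor_part_frame:
  assumes "detg f w \<noteq> 0" "l < 2"
  shows "lor (nor_part f w v) (pd f l w) = 0"
proof -
  have "lor (tan_part f w v) (pd f l w) = (\<Sum>p<2. lor v (pd f p w) * (\<Sum>k<2. ginv f w p k * gm f w l k))"
    by (simp add: tan_part_def tcoef_def sum_lessThan_2 lor_simps gm_def lor_commute[of "pd f l w"]
        ginv_commute algebra_simps)
  also have "\<dots> = lor v (pd f l w)"
    using ginv_gm[OF assms(1) _ assms(2)] assms(2) by (auto simp: sum_lessThan_2 less_2_cases_iff)
  finally show ?thesis by (simp add: nor_part_def lor_simps)
qed

lemma lor_tan_part_normal: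
  assumes "\<And>l. l < 2 \<Longrightarrow> lor \<nu> (pd f l w) = 0"
  shows "lor (tan_part f w v) \<nu> = 0"
  using assms by (simp add: tan_part_def sum_lessThan_2 lor_simps lor_commute[of _ \<nu>])

lemma lor_nor_part_normal:
  assumes "\<And>l. l < 2 \<Longrightarrow> lor \<nu> (pd f l w) = 0"
  shows "lor (nor_part f w v) \<nu> = lor v \<nu>"
  using lor_tan_part_normal[OF assms] by (simp add: nor_part_def lor_simps)

lemma lor_tan_part_nor_part:
  assumes "detg f w \<noteq> 0"
  shows "lor (tan_part f w v) (nor_part f w v') = 0"
  using lor_nor_part_frame[OF assms] by (intro lor_tan_part_normal) simp

lemma tan_part_eq_0:
  assumes "\<And>l. l < 2 \<Longrightarrow> lor v (pd f l w) = 0"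
  shows "tan_part f w v = 0"
  using assms by (simp add: tan_part_def tcoef_def sum_lessThan_2)

lemma differentiable_ginv:
  assumes "\<And>k. pd f k differentiable (at u)" "detg f u \<noteq> 0"
  shows "(\<lambda>w. ginv f w k l) differentiable (at u)"
proof -
  have gm: "(\<lambda>w. gm f w i j) differentiable (at u)" for i j
    unfolding gm_def by (rule differentiable_lor[OF assms(1) assms(1)])
  then have "(\<lambda>w. detg f w) differentiable (at u)"
    unfolding detg_def by (intro differentiable_diff differentiable_mult)
  then have q: "(\<lambda>w. gm f w i j / detg f w) differentiable (at u)" for i j
    using gm assms(2) by (intro differentiable_divide)
  then have "(\<lambda>w. - gm f w i j / detg f w) differentiable (at u)" for i j
    using differentiable_minus[OF q] by simp
  moreover have "(\<lambda>w. ginv f w k l) =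
     (if k = 0 \<and> l = 0 then (\<lambda>w. gm f w 1 1 / detg f w)
      else if k = 1 \<and> l = 1 then (\<lambda>w. gm f w 0 0 / detg f w)
      else if k = 0 \<and> l = 1 then (\<lambda>w. - gm f w 0 1 / detg f w)
      else (\<lambda>w. - gm f w 1 0 / detg f w))"
    by (rule ext) (simp add: ginv_def)
  ultimately show ?thesis using q by simp
qed

lemma differentiable_tcoef:
  assumes "\<And>k. pd f k differentiable (at u)" "detg f u \<noteq> 0" "V differentiable (at u)"
  shows "(\<lambda>w. tcoef f w (V w) k) differentiable (at u)"
  unfolding tcoef_def using assms
  by (intro differentiable_sum finite_lessThan ballI differentiable_mult differentiable_ginv
      differentiable_lor)

lemma differentiable_tan_part:
  assumes "\<And>k. pd f k differentiable (at u)" "detg f u \<noteq> 0" "V differentiable (at u)"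
  shows "(\<lambda>w. tan_part f w (V w)) differentiable (at u)"
  unfolding tan_part_def using assms
  by (intro differentiable_sum finite_lessThan ballI differentiable_scaleR differentiable_tcoef)

section \<open>Christoffel symbols and the Gauss formula\<close>

lemma christoffel_eq_tcoef:
  assumes "\<And>k. pd f k differentiable (at u)" "\<And>i j. pd (pd f i) j u = pd (pd f j) i u"
  shows "christoffel f u k i j = tcoef f u (pd (pd f j) i u) k"
proof -
  have pd_gm: "pd (\<lambda>w. gm f w a b) d u
      = lor (pd (pd f a) d u) (pd f b u) + lor (pd f a u) (pd (pd f b) d u)" for a b d
    unfolding gm_def by (rule pd_lor[OF assms(1) assms(1)])
  have "pd (\<lambda>w. gm f w j l) i u + pd (\<lambda>w. gm f w i l) j u - pd (\<lambda>w. gm f w i j) l u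
      = 2 * lor (pd (pd f j) i u) (pd f l u)" for l
    unfolding pd_gm assms(2)[of i j] assms(2)[of l i] assms(2)[of l j]
    by (simp add: lor_commute[of "pd f _ u"])
  then show ?thesis unfolding christoffel_def tcoef_def by (simp add: sum_distrib_left)
qed

lemma levi_civita_eq_tan_part_derivative:
  assumes "smooth_chart U f" "open U" "u \<in> U" "detg f u \<noteq> 0" "V differentiable (at u)"
    and tangent: "\<And>w. w \<in> U \<Longrightarrow> tan_part f w (V w) = V w"
  shows "levi_civita f u X V = tan_part f u (\<Sum>i<2. tcoef f u X i *\<^sub>R pd V i u)"
proof -
  define c where "c = (\<lambda>k w. tcoef f w (V w) k)"
  have Df: "\<And>k. pd f k differentiable (at u)"
    using smooth_chart_differentiable(2)[OF assms(1,3)] .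
  have pd_V: "pd V i u = (\<Sum>k<2. pd (c k) i u *\<^sub>R pd f k u + c k u *\<^sub>R pd (pd f k) i u)" for i
  proof -
    have "pd V i u = pd (\<lambda>w. \<Sum>k<2. c k w *\<^sub>R pd f k w) i u"
      using tangent by (intro pd_cong[OF assms(2,3)]) (simp add: tan_part_def c_def)
    also have "\<dots> = (\<Sum>k<2. pd (c k) i u *\<^sub>R pd f k u + c k u *\<^sub>R pd (pd f k) i u)"
      using differentiable_tcoef[OF Df assms(4,5)] Df by (intro pd_frame_combination) (simp_all add: c_def)
    finally show ?thesis .
  qed
  have tcoef_pd_V: "tcoef f u (pd V i u) k = pd (c k) i u + (\<Sum>j<2. christoffel f u k i j * c j u)"
    if "k < 2" for i k
    using that tcoef_frame[OF assms(4) that]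
    by (auto simp: pd_V tcoef_sum tcoef_add tcoef_scaleR sum_lessThan_2 less_2_cases_iff mult.commute
        christoffel_eq_tcoef[OF Df smooth_chart_pd_pd_commute[OF assms(1,2,3)]])
  have "tcoef f u (\<Sum>i<2. tcoef f u X i *\<^sub>R pd V i u) k
      = (\<Sum>i<2. tcoef f u X i * pd (c k) i u)
        + (\<Sum>i<2. \<Sum>j<2. christoffel f u k i j * tcoef f u X i * tcoef f u (V u) j)"
    if "k < 2" for k
    using tcoef_pd_V[OF that] by (simp add: tcoef_sum tcoef_add tcoef_scaleR sum_lessThan_2 c_def algebra_simps)
  then show ?thesis
    unfolding levi_civita_def tan_part_def by (intro sum.cong) (auto simp: c_def)
qed

lemma lor_pd_tan_part_frame:
  assumes "smooth_chart U f" "open U" "u \<in> U" "\<And>w. w \<in> U \<Longrightarrow> detg f w \<noteq> 0" "l < 2"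
  shows "lor (pd (\<lambda>w. tan_part f w Z) i u) (pd f l u) = lor (nor_part f u Z) (pd (pd f l) i u)"
proof -
  let ?T = "\<lambda>w. tan_part f w Z"
  have Df: "\<And>k. pd f k differentiable (at u)"
    using smooth_chart_differentiable(2)[OF assms(1,3)] .
  have DT: "?T differentiable (at u)"
    using differentiable_tan_part[OF Df assms(4)[OF assms(3)] differentiable_const] .
  have "pd (\<lambda>w. lor (?T w) (pd f l w)) i u = pd (\<lambda>w. lor Z (pd f l w)) i u"
  proof (rule pd_cong[OF assms(2,3)])
    fix w assume "w \<in> U"
    then have "lor (nor_part f w Z) (pd f l w) = 0"
      using lor_nor_part_frame assms(4,5) by blast
    then show "lor (?T w) (pd f l w) = lor Z (pd f l w)"
      by (simp add: nor_part_def lor_simps)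
  qed
  then have "lor (pd ?T i u) (pd f l u) + lor (?T u) (pd (pd f l) i u) = lor Z (pd (pd f l) i u)"
    by (simp add: pd_lor[OF DT Df] pd_lor[OF differentiable_const Df] pd_const)
  then show ?thesis by (simp add: nor_part_def lor_simps)
qed

lemma lor_sff_normal:
  assumes "\<And>l. l < 2 \<Longrightarrow> lor \<nu> (pd f l u) = 0"
  shows "lor (sff f u Y X) \<nu> = (\<Sum>i<2. \<Sum>j<2. tcoef f u Y i * tcoef f u X j * lor (pd (pd f j) i u) \<nu>)"
  by (simp add: sff_def lor_nor_part_normal[OF assms] lor_simps sum_lessThan_2)

section \<open>Charts with a null tangential part\<close>

text \<open>Timelikeness of the surface enters only through \<open>detg f w \<noteq> 0\<close>, and the canonical
  null direction only through \<open>\<langle>Z\<^sup>\<top>, Z\<^sup>\<top>\<rangle> = 0\<close>.\<close>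

locale null_tangent_chart =
  fixes U :: "(real \<times> real) set" and f :: "real \<times> real \<Rightarrow> 'n::finite mink" and Z :: "'n mink"
  assumes smooth: "smooth_chart U f" and open_U: "open U"
    and detg_nonzero: "\<And>w. w \<in> U \<Longrightarrow> detg f w \<noteq> 0"
    and tan_part_null: "\<And>w. w \<in> U \<Longrightarrow> lor (tan_part f w Z) (tan_part f w Z) = 0"
begin

lemma nor_part_normal: "w \<in> U \<Longrightarrow> l < 2 \<Longrightarrow> lor (nor_part f w Z) (pd f l w) = 0"
  using lor_nor_part_frame detg_nonzero by blast

lemma lor_pd_tan_part_nor_part:
  assumes "u \<in> U"
  shows "lor (pd (\<lambda>w. tan_part f w Z) j u) (nor_part f u Z) = 0"
proof -
  let ?T = "\<lambda>w. tan_part f w Z"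
  have DT: "?T differentiable (at u)"
    using differentiable_tan_part[OF smooth_chart_differentiable(2)[OF smooth assms]
        detg_nonzero[OF assms] differentiable_const] .
  have TZ: "lor (?T w) Z = 0" if "w \<in> U" for w
  proof -
    have "lor (?T w) Z = lor (?T w) (?T w) + lor (?T w) (nor_part f w Z)"
      by (simp add: nor_part_def lor_simps)
    then show ?thesis
      using tan_part_null[OF that] lor_tan_part_nor_part[OF detg_nonzero[OF that]] by simp
  qed
  have "pd (\<lambda>w. lor (?T w) (?T w)) j u = pd (\<lambda>w. 0) j u"
    using tan_part_null by (intro pd_cong[OF open_U assms]) simp
  then have "lor (pd ?T j u) (?T u) = 0"
    by (simp add: pd_lor[OF DT DT] pd_const lor_commute[of "?T u"])
  moreover have "pd (\<lambda>w. lor (?T w) Z) j u = pd (\<lambda>w. 0) j u"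
    using TZ by (intro pd_cong[OF open_U assms]) simp
  then have "lor (pd ?T j u) Z = 0"
    by (simp add: pd_lor[OF DT differentiable_const] pd_const)
  ultimately show ?thesis by (simp add: nor_part_def lor_simps)
qed

lemma lor_second_partials_nor_part:
  assumes "u \<in> U"
  shows "lor (\<Sum>k<2. tcoef f u Z k *\<^sub>R pd (pd f k) j u) (nor_part f u Z) = 0"
proof -
  have Df: "\<And>k. pd f k differentiable (at u)"
    using smooth_chart_differentiable(2)[OF smooth assms] .
  have "pd (\<lambda>w. tan_part f w Z) j u
      = (\<Sum>k<2. pd (\<lambda>w. tcoef f w Z k) j u *\<^sub>R pd f k u + tcoef f u Z k *\<^sub>R pd (pd f k) j u)"
    unfolding tan_part_def
    using differentiable_tcoef[OF Df detg_nonzero[OF assms] differentiable_const] Df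
    by (rule pd_frame_combination)
  then show ?thesis
    using lor_pd_tan_part_nor_part[OF assms, of j] nor_part_normal[OF assms]
    by (simp add: sum_lessThan_2 lor_simps lor_commute[of "pd f _ u"])
qed

lemma sff_tan_part_nor_part:
  assumes "u \<in> U"
  shows "lor (sff f u (tan_part f u Z) X) (nor_part f u Z) = 0"
proof -
  have "lor (sff f u (tan_part f u Z) X) (nor_part f u Z)
      = (\<Sum>j<2. tcoef f u X j * lor (\<Sum>i<2. tcoef f u Z i *\<^sub>R pd (pd f i) j u) (nor_part f u Z))"
    using nor_part_normal[OF assms] smooth_chart_pd_pd_commute[OF smooth open_U assms]
    by (simp add: lor_sff_normal lor_commute[of "nor_part f u Z"] tcoef_tan_part sum_lessThan_2
        lor_simps algebra_simps)
  also have "\<dots> = 0"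
    by (simp add: lor_second_partials_nor_part[OF assms])
  finally show ?thesis .
qed

lemma shape_nor_part_tan_part:
  "u \<in> U \<Longrightarrow> shape f u (nor_part f u Z) (tan_part f u Z) = 0"
  by (simp add: shape_def sff_tan_part_nor_part)

lemma levi_civita_tan_part:
  assumes "u \<in> U"
  shows "levi_civita f u (tan_part f u Z) (\<lambda>w. tan_part f w Z) = 0"
proof -
  let ?D = "\<Sum>i<2. tcoef f u Z i *\<^sub>R pd (\<lambda>w. tan_part f w Z) i u"
  have "levi_civita f u (tan_part f u Z) (\<lambda>w. tan_part f w Z) = tan_part f u ?D"
    using smooth_chart_differentiable(2)[OF smooth assms] detg_nonzero[OF assms]
    by (simp add: levi_civita_eq_tan_part_derivative[OF smooth open_U assms] tcoef_tan_part
        differentiable_tan_part tan_part_idem)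
  also have "tan_part f u ?D = 0"
  proof (rule tan_part_eq_0)
    fix l :: nat assume "l < 2"
    have "lor ?D (pd f l u) = (\<Sum>i<2. tcoef f u Z i * lor (nor_part f u Z) (pd (pd f l) i u))"
      using lor_pd_tan_part_frame[OF smooth open_U assms detg_nonzero \<open>l < 2\<close>]
      by (simp add: sum_lessThan_2 lor_simps)
    also have "\<dots> = lor (\<Sum>i<2. tcoef f u Z i *\<^sub>R pd (pd f i) l u) (nor_part f u Z)"
      using smooth_chart_pd_pd_commute[OF smooth open_U assms]
      by (simp add: sum_lessThan_2 lor_simps lor_commute[of "nor_part f u Z"])
    also have "\<dots> = 0"
      by (rule lor_second_partials_nor_part[OF assms])
    finally show "lor ?D (pd f l u) = 0" .
  qed
  finally show ?thesis .
qed

end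

theorem mainTheorem2:
  fixes U :: "(real \<times> real) set" and f :: "real \<times> real \<Rightarrow> 'n::finite mink" and Z :: "'n mink"
  assumes surf: "timelike_surface_chart U f"
    and unit: "lor Z Z = 1"
    and null: "\<forall>u\<in>U. lightlike (tan_part f u Z)"
  shows "\<forall>u\<in>U.
           (\<forall>X\<in>tspace f u. lor (sff f u (tan_part f u Z) X) (nor_part f u Z) = 0)
         \<and> shape f u (nor_part f u Z) (tan_part f u Z) = 0
         \<and> levi_civita f u (tan_part f u Z) (\<lambda>w. tan_part f w Z) = 0"
proof -
  interpret null_tangent_chart U f Z
    using surf null by unfold_locales (auto simp: timelike_surface_chart_def lightlike_def)
  show ?thesis
    using sff_tan_part_nor_part shape_nor_part_tan_part levi_civita_tan_part by blast
qed

end
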